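(* Let $\mathcal{C}\subseteq\mathbb{R}^n$ be a nonempty closed convex set and $\theta_0\in\mathcal{C}$. Then for every $x\in\mathbb{R}^n$, $$\|\Pi_{F_{\mathcal{C}}(\theta_0)}(x)\|^2\ge\|\Pi_{K_{\mathcal{C}}}(x)\|^2.$$
   Context: $\Pi_S$ is Euclidean projection onto a closed convex set $S$. $F_{\mathcal{C}}(\theta_0)=\{\theta-\theta_0:\theta\in\mathcal{C}\}$; $T_{\mathcal{C}}(\theta)=\mathrm{cl}\{\alpha(\theta'-\theta):\alpha\ge0,\theta'\in\mathcal{C}\}$ is the tangent cone; $K_{\mathcal{C}}=\bigcap_{\theta\in\mathcal{C}}T_{\mathcal{C}}(\theta)$ is the core cone. *)

theory Defs
  imports "HOL-Analysis.Analysis"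
begin

definition proj :: "'a::euclidean_space set \<Rightarrow> 'a \<Rightarrow> 'a" where
  "proj S x = closest_point S x"

definition feas_dir :: "'a::euclidean_space set \<Rightarrow> 'a \<Rightarrow> 'a set" where
  "feas_dir C \<theta>0 = {\<theta> - \<theta>0 | \<theta>. \<theta> \<in> C}"

definition tangent_cone :: "'a::euclidean_space set \<Rightarrow> 'a \<Rightarrow> 'a set" where
  "tangent_cone C \<theta> = closure {\<alpha> *\<^sub>R (\<theta>' - \<theta>) | \<alpha> \<theta>'. \<alpha> \<ge> 0 \<and> \<theta>' \<in> C}"

definition core_cone :: "'a::euclidean_space set \<Rightarrow> 'a set" where
  "core_cone C = (\<Inter>\<theta>\<in>C. tangent_cone C \<theta>)"

end

theory Submission
  imports Defs
begin

text \<open>Every direction d of the core cone K is a recession direction of C: the projection z of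
  \<open>\<theta> + d\<close> onto C satisfies the variational inequality against both \<open>\<theta> - z\<close> and d (the latter
  because d lies in the tangent cone at z), so \<open>\<theta> + d = z \<in> C\<close>. Hence
  \<open>F\<^sub>C(\<theta>\<^sub>0) + K \<subseteq> F\<^sub>C(\<theta>\<^sub>0)\<close>. Since K is a closed cone, its projection q of x satisfies
  \<open>\<langle>x - q, q\<rangle> = 0\<close>; with p the projection onto \<open>F\<^sub>C(\<theta>\<^sub>0)\<close>, testing the variational
  inequality at \<open>p + q\<close> gives \<open>\<parallel>q\<parallel>\<^sup>2 = \<langle>x, q\<rangle> \<le> \<langle>p, q\<rangle> \<le> \<parallel>p\<parallel> \<parallel>q\<parallel>\<close>.\<close>

lemma cone_tangent_cone: "cone (tangent_cone C \<theta>)"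
  unfolding tangent_cone_def
proof (rule cone_closure)
  show "cone {\<alpha> *\<^sub>R (\<theta>' - \<theta>) | \<alpha> \<theta>'. \<alpha> \<ge> 0 \<and> \<theta>' \<in> C}"
  proof (unfold cone_def, clarify)
    fix c \<alpha> :: real and \<theta>' assume "c \<ge> 0" "\<alpha> \<ge> 0" "\<theta>' \<in> C"
    then have "c *\<^sub>R \<alpha> *\<^sub>R (\<theta>' - \<theta>) = (c * \<alpha>) *\<^sub>R (\<theta>' - \<theta>) \<and> c * \<alpha> \<ge> 0 \<and> \<theta>' \<in> C"
      by simp
    then show "\<exists>\<beta> \<theta>''. c *\<^sub>R \<alpha> *\<^sub>R (\<theta>' - \<theta>) = \<beta> *\<^sub>R (\<theta>'' - \<theta>) \<and> \<beta> \<ge> 0 \<and> \<theta>'' \<in> C"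
      by blast
  qed
qed

lemma cone_core_cone: "cone (core_cone C)"
  unfolding core_cone_def using cone_tangent_cone by blast

lemma zero_in_core_cone: "0 \<in> core_cone C"
proof -
  have "0 \<in> tangent_cone C \<theta>" if "\<theta> \<in> C" for \<theta>
  proof -
    have "0 \<in> {\<alpha> *\<^sub>R (\<theta>' - \<theta>) | \<alpha> \<theta>'. \<alpha> \<ge> 0 \<and> \<theta>' \<in> C}"
      using that by (intro CollectI exI[of _ 0] exI[of _ \<theta>]) simp
    then show ?thesis unfolding tangent_cone_def by (rule closure_subset[THEN subsetD])
  qed
  then show ?thesis unfolding core_cone_def by blast
qed

lemma closed_core_cone: "closed (core_cone C)"
  unfolding core_cone_def tangent_cone_def by (intro closed_INT) auto

lemma tangent_cone_closest_point_subset: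
  fixes C :: "'a::euclidean_space set"
  assumes "closed C" "convex C"
  shows "tangent_cone C (closest_point C y) \<subseteq> {v. inner (y - closest_point C y) v \<le> 0}"
  unfolding tangent_cone_def
proof (rule closure_minimal)
  let ?z = "closest_point C y"
  show "{\<alpha> *\<^sub>R (\<theta>' - ?z) | \<alpha> \<theta>'. \<alpha> \<ge> 0 \<and> \<theta>' \<in> C} \<subseteq> {v. inner (y - ?z) v \<le> 0}"
  proof clarify
    fix \<alpha> :: real and \<theta>' assume "\<alpha> \<ge> 0" "\<theta>' \<in> C"
    moreover from \<open>\<theta>' \<in> C\<close> have "inner (y - ?z) (\<theta>' - ?z) \<le> 0"
      by (rule closest_point_dot[OF assms(2,1)])
    ultimately show "inner (y - ?z) (\<alpha> *\<^sub>R (\<theta>' - ?z)) \<le> 0"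
      by (simp add: mult_nonneg_nonpos)
  qed
qed (rule closed_halfspace_le)

lemma add_core_cone_mem:
  fixes C :: "'a::euclidean_space set"
  assumes "closed C" "convex C" "\<theta> \<in> C" "d \<in> core_cone C"
  shows "\<theta> + d \<in> C"
proof -
  define z where "z = closest_point C (\<theta> + d)"
  have "z \<in> C"
    unfolding z_def using closest_point_in_set[OF assms(1)] assms(3) by blast
  with assms(4) have "d \<in> tangent_cone C z" unfolding core_cone_def by blast
  then have "inner (\<theta> + d - z) d \<le> 0"
    using tangent_cone_closest_point_subset[OF assms(1,2)] unfolding z_def by blast
  moreover have "inner (\<theta> + d - z) (\<theta> - z) \<le> 0"
    unfolding z_def by (rule closest_point_dot[OF assms(2,1,3)])
  moreover have "inner (\<theta> + d - z) (\<theta> + d - z) = inner (\<theta> + d - z) (\<theta> - z) + inner (\<theta> + d - z) d"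
    by (simp add: inner_diff_right inner_add_right)
  ultimately have "inner (\<theta> + d - z) (\<theta> + d - z) \<le> 0" by linarith
  then have "\<theta> + d - z = 0" by (metis inner_eq_zero_iff inner_ge_zero order.antisym)
  with \<open>z \<in> C\<close> show ?thesis by simp
qed

lemma feas_dir_eq_translation: "feas_dir C \<theta>0 = (\<lambda>\<theta>. - \<theta>0 + \<theta>) ` C"
  unfolding feas_dir_def by auto

lemma add_core_cone_feas_dir:
  fixes C :: "'a::euclidean_space set"
  assumes "closed C" "convex C" "p \<in> feas_dir C \<theta>0" "d \<in> core_cone C"
  shows "p + d \<in> feas_dir C \<theta>0"
proof -
  from assms(3) obtain \<theta> where "\<theta> \<in> C" "p = \<theta> - \<theta>0" unfolding feas_dir_def by blast
  moreover from add_core_cone_mem[OF assms(1,2) \<open>\<theta> \<in> C\<close> assms(4)] have "\<theta> + d \<in> C" .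
  ultimately show ?thesis unfolding feas_dir_def by force
qed

text \<open>Moving q to \<open>(1 + s) q\<close> changes \<open>\<parallel>x - q\<parallel>\<^sup>2\<close> by \<open>s\<^sup>2 b - 2 s a\<close> with
  \<open>a = \<langle>x - q, q\<rangle>\<close>, \<open>b = \<parallel>q\<parallel>\<^sup>2\<close>; choosing \<open>s = a / b\<close>, or \<open>s = -1\<close> if that is smaller,
  forces \<open>a = 0\<close> without any limit argument.\<close>

lemma closest_point_cone_orthogonal:
  fixes K :: "'a::euclidean_space set"
  assumes "closed K" "cone K" "K \<noteq> {}"
  shows "inner (x - closest_point K x) (closest_point K x) = 0"
proof -
  define q where "q = closest_point K x"
  define a where "a = inner (x - q) q"
  define b where "b = inner q q"
  have q: "q \<in> K" unfolding q_def using closest_point_in_set[OF assms(1,3)] .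
  have ineq: "2 * s * a \<le> s\<^sup>2 * b" if "s \<ge> -1" for s :: real
  proof -
    from that q have "(1 + s) *\<^sub>R q \<in> K" by (intro mem_cone[OF assms(2)]) simp_all
    then have "dist x q \<le> dist x ((1 + s) *\<^sub>R q)"
      unfolding q_def by (rule closest_point_le[OF assms(1)])
    then have "(norm (x - q))\<^sup>2 \<le> (norm ((x - q) - s *\<^sub>R q))\<^sup>2"
      by (simp add: dist_norm algebra_simps)
    also have "\<dots> = (norm (x - q))\<^sup>2 - 2 * s * a + s\<^sup>2 * b"
      unfolding power2_norm_eq_inner a_def b_def
      by (simp add: inner_commute[of q x] power2_eq_square algebra_simps)
    finally show ?thesis by simp
  qed
  show ?thesis
  proof (cases "b = 0")
    case True
    then show ?thesis unfolding b_def q_def by simp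
  next
    case False
    then have "b > 0" unfolding b_def by (simp add: order_less_le)
    show ?thesis
    proof (cases "a / b \<ge> -1")
      case True
      from ineq[OF True] \<open>b > 0\<close> have "2 * a\<^sup>2 \<le> a\<^sup>2"
        by (simp add: power2_eq_square field_simps)
      then show ?thesis unfolding a_def q_def by simp
    next
      case False
      with \<open>b > 0\<close> ineq[of "-1"] show ?thesis by (simp add: field_simps)
    qed
  qed
qed

lemma norm_closest_point_cone_le:
  fixes S K :: "'a::euclidean_space set"
  assumes "closed S" "convex S" "S \<noteq> {}" "closed K" "cone K" "K \<noteq> {}"
    and absorb: "\<And>p d. p \<in> S \<Longrightarrow> d \<in> K \<Longrightarrow> p + d \<in> S"
  shows "norm (closest_point K x) \<le> norm (closest_point S x)"
proof -
  define p where "p = closest_point S x"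
  define q where "q = closest_point K x"
  have "p \<in> S" unfolding p_def using closest_point_in_set[OF assms(1,3)] .
  moreover have "q \<in> K" unfolding q_def using closest_point_in_set[OF assms(4,6)] .
  ultimately have "p + q \<in> S" by (rule absorb)
  then have "inner (x - p) ((p + q) - p) \<le> 0"
    unfolding p_def by (rule closest_point_dot[OF assms(2,1)])
  then have "inner x q \<le> inner p q" by (simp add: inner_diff_left)
  moreover have "inner x q = (norm q)\<^sup>2"
    using closest_point_cone_orthogonal[OF assms(4-6), of x]
    by (simp add: q_def inner_diff_left power2_norm_eq_inner)
  moreover have "inner p q \<le> norm p * norm q" by (rule norm_cauchy_schwarz)
  ultimately have "norm q * norm q \<le> norm p * norm q" by (simp add: power2_eq_square)
  then show ?thesis unfolding p_def q_def
    by (metis mult_right_le_imp_le norm_ge_zero order_less_le)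
qed

theorem lemma11:
  fixes C :: "(real ^ 'n) set" and \<theta>0 :: "real ^ 'n"
  assumes "C \<noteq> {}" and "closed C" and "convex C" and "\<theta>0 \<in> C"
  shows "\<forall>x. (norm (proj (feas_dir C \<theta>0) x))\<^sup>2 \<ge> (norm (proj (core_cone C) x))\<^sup>2"
proof
  fix x :: "real ^ 'n"
  have "norm (closest_point (core_cone C) x) \<le> norm (closest_point (feas_dir C \<theta>0) x)"
  proof (rule norm_closest_point_cone_le)
    show "closed (feas_dir C \<theta>0)"
      unfolding feas_dir_eq_translation using assms(2) by (rule closed_translation)
    show "convex (feas_dir C \<theta>0)"
      unfolding feas_dir_eq_translation using assms(3) by (rule convex_translation)
    show "feas_dir C \<theta>0 \<noteq> {}"
      unfolding feas_dir_eq_translation using assms(1) by blast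
    show "core_cone C \<noteq> {}" using zero_in_core_cone by blast
  qed (use closed_core_cone cone_core_cone add_core_cone_feas_dir assms(2,3) in auto)
  then show "(norm (proj (feas_dir C \<theta>0) x))\<^sup>2 \<ge> (norm (proj (core_cone C) x))\<^sup>2"
    unfolding proj_def by (simp add: power_mono)
qed

end
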